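(* Let $p$ be a prime, let $\alpha,n\in\mathbb{N}$ with $\alpha\geqslant2$, and let $r,s,t\in\mathbb{Z}$ with $0\leqslant s,t<p^{\alpha-2}$. Then $$p^{-\left\lfloor\frac{p^{\alpha-2}n+s-p^{\alpha-1}}{\varphi(p^{\alpha})}\right\rfloor}\sum_{k\equiv p^{\alpha-2}r+t\ (\mathrm{mod}\ p^{\alpha})}\binom{p^{\alpha-2}n+s}k(-1)^k\equiv(-1)^t\binom st\Bigg(p^{-\left\lfloor\frac{n-p}{\varphi(p^2)}\right\rfloor}\sum_{k\equiv r\ (\mathrm{mod}\ p^2)}\binom nk(-1)^k\Bigg)\pmod p.$$
   Context: $\varphi$ is Euler's totient function. Sums run over all integers $k$ in the indicated residue class with $\binom Nk=0$ unless $0\le k\le N$. For rationals $u,v$, $u\equiv v\pmod p$ means $\operatorname{ord}_p(u-v)\geq 1$. *)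

theory Defs
  imports "HOL-Number_Theory.Number_Theory"
begin

definition rat_cong_p :: "nat \<Rightarrow> rat \<Rightarrow> rat \<Rightarrow> bool" where
  "rat_cong_p p u v \<longleftrightarrow>
     (\<exists>a b::int. b \<noteq> 0 \<and> \<not> int p dvd b \<and> u - v = of_int (int p * a) / of_int b)"

definition alt_binom_sum :: "nat \<Rightarrow> int \<Rightarrow> int \<Rightarrow> int" where
  "alt_binom_sum N a m = (\<Sum>k\<in>{k. k \<le> N \<and> [int k = a] (mod m)}. int (N choose k) * (-1) ^ k)"

end

theory Submission
  imports Defs "HOL-Computational_Algebra.Polynomial"
begin

(*
  Residue-class sums are read off polynomials: summing the coefficients of P over the exponents
  k = a (mod M) is linear and kills the multiples of X^M - 1, so if P lies in the ideal (c, X^M - 1)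
  then c divides each of these class sums. In this language the congruences of Fleck and Weisman say
  that (1 - Y)^K lies in (p^floor((K - p^j) / phi(p^(j+1))), Y^(p^(j+1)) - 1); they follow by
  induction on K, since (1 - Y)^phi(p^(j+1)) is congruent mod p to (Y^(p^(j+1)) - 1) / (Y^(p^j) - 1).

  Let q = p^(alpha-2). Then (1 - X)^q = (1 - X^q) + p A; expanding (1 - X)^(q n) binomially and
  applying Fleck's congruence modulo p^2 with Y = X^q to every (1 - X^q)^(n-i) shows that
  (1 - X)^(q n) - (1 - X^q)^n lies in (p^(e+1), X^(q p^2) - 1), where e = floor((n - p) / phi(p^2)).
  After multiplying by (1 - X)^s, the class of q r + t modulo q p^2 of (1 - X)^s (1 - X^q)^n only
  meets the term X^t of (1 - X)^s, because s, t < q, and so it is (-1)^t (s choose t) times the class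
  sum of (1 - X)^n at r modulo p^2. Both floors in the statement equal e; dividing by p^e gives the
  congruence, which is trivial when e < 0.
*)

definition ideal2 :: "'a::comm_ring_1 \<Rightarrow> 'a \<Rightarrow> 'a set" where
  "ideal2 a b = {a * x + b * y | x y. True}"

lemma ideal2_iff: "z \<in> ideal2 a b \<longleftrightarrow> (\<exists>x y. z = a * x + b * y)"
  by (simp add: ideal2_def)

lemma ideal2_one [simp]: "z \<in> ideal2 1 b"
  unfolding ideal2_iff by (rule exI[of _ z], rule exI[of _ 0]) simp

lemma ideal2_zero [simp]: "0 \<in> ideal2 a b"
  unfolding ideal2_iff by (rule exI[of _ 0], rule exI[of _ 0]) simp

lemma ideal2_add: "z \<in> ideal2 a b \<Longrightarrow> w \<in> ideal2 a b \<Longrightarrow> z + w \<in> ideal2 a b"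
proof -
  assume "z \<in> ideal2 a b" "w \<in> ideal2 a b"
  then obtain x y x' y' where "z = a * x + b * y" "w = a * x' + b * y'"
    unfolding ideal2_iff by blast
  then have "z + w = a * (x + x') + b * (y + y')" by (simp add: algebra_simps)
  then show ?thesis unfolding ideal2_iff by blast
qed

lemma ideal2_sum: "(\<And>i. i \<in> S \<Longrightarrow> f i \<in> ideal2 a b) \<Longrightarrow> sum f S \<in> ideal2 a b"
  by (induction S rule: infinite_finite_induct) (simp_all add: ideal2_add)

lemma ideal2_mult_generators: "z \<in> ideal2 a b \<Longrightarrow> c * z \<in> ideal2 (c * a) (c * b)"
proof -
  assume "z \<in> ideal2 a b"
  then obtain x y where "z = a * x + b * y" unfolding ideal2_iff by blast
  then have "c * z = (c * a) * x + (c * b) * y" by (simp add: algebra_simps)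
  then show ?thesis unfolding ideal2_iff by blast
qed

lemma ideal2_mono: "z \<in> ideal2 a b \<Longrightarrow> a' dvd a \<Longrightarrow> b' dvd b \<Longrightarrow> z \<in> ideal2 a' b'"
proof -
  assume "z \<in> ideal2 a b" "a' dvd a" "b' dvd b"
  then obtain k l x y where "a = a' * k" "b = b' * l" "z = a * x + b * y"
    unfolding ideal2_iff dvd_def by blast
  then have "z = a' * (k * x) + b' * (l * y)" by (simp add: mult.assoc)
  then show ?thesis unfolding ideal2_iff by blast
qed

lemma ideal2_mult: "z \<in> ideal2 a b \<Longrightarrow> c * z \<in> ideal2 a b"
  by (rule ideal2_mono[OF ideal2_mult_generators dvd_triv_right dvd_triv_right])

lemma ideal2_second: "b * y \<in> ideal2 a b"
  unfolding ideal2_iff by (rule exI[of _ 0]) auto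

lemma one_minus_power_expand:
  "(1 - Y :: 'a::comm_ring_1) ^ n = (\<Sum>k\<le>n. of_int ((-1) ^ k * int (n choose k)) * Y ^ k)"
proof -
  have "(1 - Y) ^ n = (- Y + 1) ^ n" by simp
  also have "\<dots> = (\<Sum>k\<le>n. of_nat (n choose k) * (- Y) ^ k * 1 ^ (n - k))"
    by (rule binomial_ring)
  also have "\<dots> = (\<Sum>k\<le>n. of_int ((-1) ^ k * int (n choose k)) * Y ^ k)"
    by (rule sum.cong) (simp_all add: power_minus[of Y])
  finally show ?thesis .
qed

lemma prime_dvd_power_add_diff:
  fixes x y :: "'a::comm_ring_1"
  assumes "prime p"
  shows "of_nat p dvd (x + y) ^ p - x ^ p - y ^ p"
proof -
  define g where "g k = of_nat (p choose k) * x ^ k * y ^ (p - k)" for k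
  have p0: "0 < p" using assms prime_gt_0_nat by blast
  have "{..p} = insert p (insert 0 {1..<p})" using p0 by auto
  then have "(x + y) ^ p = g p + (g 0 + (\<Sum>k\<in>{1..<p}. g k))"
    using p0 by (simp add: binomial_ring[of x y p] g_def)
  then have "(x + y) ^ p - x ^ p - y ^ p = (\<Sum>k\<in>{1..<p}. g k)"
    by (simp add: g_def)
  also have "of_nat p dvd \<dots>"
  proof (intro dvd_sum)
    fix k assume "k \<in> {1..<p}"
    then have "p dvd p choose k" using assms by (intro dvd_choose_prime) auto
    then obtain c where "p choose k = p * c" by blast
    then show "of_nat p dvd g k" unfolding g_def by (simp add: mult.assoc)
  qed
  finally show ?thesis .
qed

lemma prime_dvd_one_minus_power_diff:
  fixes Y :: "'a::comm_ring_1"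
  assumes "prime p"
  shows "of_nat p dvd (1 - Y) ^ p - (1 - Y ^ p)"
proof -
  have sign: "of_nat p dvd (- Y) ^ p + Y ^ p"
  proof (cases "p = 2")
    case True
    then have "(- Y) ^ p + Y ^ p = of_nat p * Y ^ 2" by (simp add: power2_eq_square)
    then show ?thesis by simp
  next
    case False
    then have "p > 2" using prime_ge_2_nat[OF assms] by linarith
    then have "odd p" using prime_odd_nat[OF assms] by blast
    then show ?thesis by simp
  qed
  have binom: "of_nat p dvd (1 + - Y) ^ p - 1 ^ p - (- Y) ^ p"
    by (rule prime_dvd_power_add_diff[OF assms])
  have "(1 - Y) ^ p - (1 - Y ^ p) = ((1 + - Y) ^ p - 1 ^ p - (- Y) ^ p) + ((- Y) ^ p + Y ^ p)"
    by simp
  then show ?thesis using dvd_add[OF binom sign] by (simp only:)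
qed

lemma dvd_diff_trans: "a dvd x - y \<Longrightarrow> a dvd y - z \<Longrightarrow> (a :: 'a::comm_ring_1) dvd x - z"
  using dvd_add[of a "x - y" "y - z"] by simp

lemma dvd_power_diff_power: "(x - y :: 'a::comm_ring_1) dvd x ^ n - y ^ n"
  by (simp add: power_diff_sumr2)

lemma prime_dvd_one_minus_prime_power_diff:
  fixes Y :: "'a::comm_ring_1"
  assumes "prime p"
  shows "of_nat p dvd (1 - Y) ^ (p ^ k) - (1 - Y ^ (p ^ k))"
proof (induction k)
  case (Suc k)
  have "of_nat p dvd ((1 - Y) ^ p ^ k) ^ p - (1 - Y ^ p ^ k) ^ p"
    using Suc.IH dvd_power_diff_power dvd_trans by blast
  moreover have "of_nat p dvd (1 - Y ^ p ^ k) ^ p - (1 - (Y ^ p ^ k) ^ p)"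
    by (rule prime_dvd_one_minus_power_diff[OF assms])
  ultimately have "of_nat p dvd ((1 - Y) ^ p ^ k) ^ p - (1 - (Y ^ p ^ k) ^ p)"
    by (rule dvd_diff_trans)
  then show ?case by (simp add: power_mult[symmetric] mult.commute)
qed simp

lemma prime_dvd_alternating_choose_pred:
  assumes "prime p" "j < p"
  shows "int p dvd (-1) ^ j * int ((p - 1) choose j) - 1"
  using assms(2)
proof (induction j)
  case (Suc j)
  have "p choose Suc j = ((p - 1) choose j) + ((p - 1) choose Suc j)"
    using assms(1) prime_gt_0_nat[OF assms(1)] by (cases p) simp_all
  moreover have "p dvd p choose Suc j"
    using assms(1) Suc.prems by (intro dvd_choose_prime) auto
  ultimately have "int p dvd int ((p - 1) choose j) + int ((p - 1) choose Suc j)"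
    by (metis of_nat_add int_dvd_int_iff)
  then have "int p dvd (-1) ^ j * (int ((p - 1) choose j) + int ((p - 1) choose Suc j))"
    by (rule dvd_mult)
  moreover have "int p dvd (-1) ^ j * int ((p - 1) choose j) - 1"
    using Suc by simp
  ultimately have "int p dvd ((-1) ^ j * int ((p - 1) choose j) - 1)
      - (-1) ^ j * (int ((p - 1) choose j) + int ((p - 1) choose Suc j))"
    by (rule dvd_diff[rotated])
  moreover have "((-1) ^ j * int ((p - 1) choose j) - 1)
      - (-1) ^ j * (int ((p - 1) choose j) + int ((p - 1) choose Suc j))
      = (-1) ^ Suc j * int ((p - 1) choose Suc j) - 1"
    by (simp add: algebra_simps)
  ultimately show ?case by metis
qed simp

lemma prime_dvd_one_minus_power_pred_diff:
  fixes Z :: "'a::comm_ring_1"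
  assumes "prime p"
  shows "of_nat p dvd (1 - Z) ^ (p - 1) - (\<Sum>j<p. Z ^ j)"
proof -
  define c where "c j = (-1) ^ j * int ((p - 1) choose j)" for j
  have "{..p - 1} = {..<p}" using prime_gt_0_nat[OF assms] by auto
  then have "(1 - Z) ^ (p - 1) = (\<Sum>j<p. of_int (c j) * Z ^ j)"
    by (simp only: one_minus_power_expand c_def)
  then have "(1 - Z) ^ (p - 1) - (\<Sum>j<p. Z ^ j) = (\<Sum>j<p. of_int (c j - 1) * Z ^ j)"
    by (simp add: sum_subtractf[symmetric] left_diff_distrib)
  also have "of_nat p dvd \<dots>"
  proof (intro dvd_sum dvd_mult2)
    fix j assume "j \<in> {..<p}"
    then obtain d where "c j - 1 = int p * d"
      using prime_dvd_alternating_choose_pred[OF assms] unfolding c_def by blast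
    then show "(of_nat p :: 'a) dvd of_int (c j - 1)" by simp
  qed
  finally show ?thesis .
qed

lemma prime_dvd_one_minus_power_totient_diff:
  fixes Y :: "'a::comm_ring_1"
  assumes "prime p"
  shows "of_nat p dvd (1 - Y) ^ (p ^ b * (p - 1)) - (\<Sum>j<p. Y ^ (p ^ b * j))"
proof -
  have "of_nat p dvd ((1 - Y) ^ p ^ b) ^ (p - 1) - (1 - Y ^ p ^ b) ^ (p - 1)"
    using prime_dvd_one_minus_prime_power_diff[OF assms] dvd_power_diff_power dvd_trans by blast
  moreover have "of_nat p dvd (1 - Y ^ p ^ b) ^ (p - 1) - (\<Sum>j<p. (Y ^ p ^ b) ^ j)"
    by (rule prime_dvd_one_minus_power_pred_diff[OF assms])
  ultimately have "of_nat p dvd ((1 - Y) ^ p ^ b) ^ (p - 1) - (\<Sum>j<p. (Y ^ p ^ b) ^ j)"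
    by (rule dvd_diff_trans)
  then show ?thesis by (simp add: power_mult)
qed

(* Modulo p, (1 - Y)^phi(p^(j+1)) is the cyclotomic quotient (Y^(p^(j+1)) - 1)/(Y^(p^j) - 1), which
   carries the ideal of level j (with one extra factor p) into the ideal of level j + 1. *)
lemma fleck_ideal_step:
  fixes Y :: "'a::comm_ring_1"
  assumes p: "prime p"
    and lower: "\<And>K. p ^ j \<le> K \<Longrightarrow>
      (1 - Y) ^ K \<in> ideal2 (of_nat p ^ ((K - p ^ j) div (p ^ j * (p - 1)) + 1)) (Y ^ p ^ j - 1)"
  shows "(1 - Y) ^ K \<in> ideal2 (of_nat p ^ ((K - p ^ j) div (p ^ j * (p - 1)))) (Y ^ p ^ Suc j - 1)"
proof -
  define c where "c = p ^ j"
  define f where "f = c * (p - 1)"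
  define \<Phi> where "\<Phi> = (\<Sum>i<p. Y ^ (c * i))"
  have "c > 0" using p prime_gt_0_nat c_def by simp
  then have "f > 0" using prime_gt_1_nat[OF p] f_def by simp
  have pc: "p * c = c + f" using prime_gt_0_nat[OF p] by (cases p) (simp_all add: f_def)
  have "Y ^ (p * c) - 1 = (Y ^ c) ^ p - 1" by (metis power_mult mult.commute)
  also have "\<dots> = (Y ^ c - 1) * (\<Sum>i<p. (Y ^ c) ^ i)" by (rule power_diff_1_eq)
  also have "(\<Sum>i<p. (Y ^ c) ^ i) = \<Phi>" by (simp add: \<Phi>_def power_mult)
  finally have cyclotomic: "\<Phi> * (Y ^ c - 1) = Y ^ (p * c) - 1" by (simp add: mult.commute)
  obtain R where "(1 - Y) ^ f - \<Phi> = of_nat p * R"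
    using prime_dvd_one_minus_power_totient_diff[OF p, of Y j]
    unfolding \<Phi>_def f_def c_def by blast
  then have R: "(1 - Y) ^ f = \<Phi> + of_nat p * R" by (simp add: algebra_simps)
  have "(1 - Y) ^ K \<in> ideal2 (of_nat p ^ ((K - c) div f)) (Y ^ (p * c) - 1)"
  proof (induction K rule: less_induct)
    case (less K)
    show ?case
    proof (cases "K < p * c")
      case True
      then have "(K - c) div f = 0" using pc \<open>f > 0\<close> by (intro div_less) linarith
      then show ?thesis by simp
    next
      case False
      define K' where "K' = K - f"
      have K': "c \<le> K'" "K = K' + f" "K' < K" using False pc \<open>f > 0\<close> by (auto simp: K'_def)
      have "K - c = (K' - c) + f * 1" using K' by simp
      then have exponent: "(K - c) div f = (K' - c) div f + 1"
        using \<open>f > 0\<close> by simp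
      have split: "(1 - Y) ^ K = \<Phi> * (1 - Y) ^ K' + of_nat p * (R * (1 - Y) ^ K')"
        by (simp add: K'(2) power_add R algebra_simps)
      have "(1 - Y) ^ K' \<in> ideal2 (of_nat p ^ ((K' - c) div f + 1)) (Y ^ c - 1)"
        using lower[of K'] K'(1) by (simp add: c_def f_def)
      then have "\<Phi> * (1 - Y) ^ K'
          \<in> ideal2 (\<Phi> * of_nat p ^ ((K' - c) div f + 1)) (Y ^ (p * c) - 1)"
        unfolding cyclotomic[symmetric] by (rule ideal2_mult_generators)
      then have first: "\<Phi> * (1 - Y) ^ K'
          \<in> ideal2 (of_nat p ^ ((K' - c) div f + 1)) (Y ^ (p * c) - 1)"
        by (rule ideal2_mono) simp_all
      have "of_nat p * (R * (1 - Y) ^ K')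
          \<in> ideal2 (of_nat p * of_nat p ^ ((K' - c) div f)) (of_nat p * (Y ^ (p * c) - 1))"
        by (rule ideal2_mult_generators[OF ideal2_mult[OF less.IH[OF K'(3)]]])
      then have second: "of_nat p * (R * (1 - Y) ^ K')
          \<in> ideal2 (of_nat p ^ ((K' - c) div f + 1)) (Y ^ (p * c) - 1)"
        by (rule ideal2_mono) simp_all
      show ?thesis
        unfolding split exponent by (rule ideal2_add[OF first second])
    qed
  qed
  then show ?thesis by (simp only: c_def f_def power_Suc)
qed

lemma fleck_exponent_mono:
  fixes c p K :: nat
  assumes "0 < c" "1 < p" "p * c \<le> K"
  shows "(K - p * c) div (p * c * (p - 1)) + 1 \<le> (K - c) div (c * (p - 1))"
proof -
  define u where "u = K - p * c"
  have "K - c = u + c * (p - 1) * 1"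
    using assms by (simp add: u_def algebra_simps diff_mult_distrib2)
  then have "(K - c) div (c * (p - 1)) = u div (c * (p - 1)) + 1"
    using assms by simp
  moreover have "u div (p * c * (p - 1)) \<le> u div (c * (p - 1))"
    using assms by (intro div_le_mono2) auto
  ultimately show ?thesis by (simp add: u_def)
qed

lemma fleck_ideal:
  fixes Y :: "'a::comm_ring_1"
  assumes p: "prime p"
  shows "(1 - Y) ^ K \<in> ideal2 (of_nat p ^ ((K - p ^ j) div (p ^ j * (p - 1)))) (Y ^ p ^ Suc j - 1)"
proof (induction j arbitrary: K)
  case 0
  have "(1 - Y) ^ K \<in> ideal2 (of_nat p ^ ((K - 1) div (p - 1) + 1)) (Y - 1)" if "1 \<le> K" for K
  proof -
    have "(1 - Y) ^ K = (Y - 1) * (- ((1 - Y) ^ (K - 1)))"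
      using that by (cases K) (simp_all add: algebra_simps)
    then show ?thesis by (simp only: ideal2_second)
  qed
  then show ?case using fleck_ideal_step[OF p, of 0 Y K] by simp
next
  case (Suc j)
  have "(1 - Y) ^ K \<in> ideal2 (of_nat p ^ ((K - p ^ Suc j) div (p ^ Suc j * (p - 1)) + 1))
      (Y ^ p ^ Suc j - 1)" if "p ^ Suc j \<le> K" for K
  proof (rule ideal2_mono[OF Suc.IH le_imp_power_dvd dvd_refl])
    show "(K - p ^ Suc j) div (p ^ Suc j * (p - 1)) + 1 \<le> (K - p ^ j) div (p ^ j * (p - 1))"
      using fleck_exponent_mono[of "p ^ j" p K] that prime_gt_1_nat[OF p] by simp
  qed
  then show ?case by (rule fleck_ideal_step[OF p])
qed

lemma div_diff_le_div_diff_add: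
  fixes i f n p :: nat
  assumes i: "2 \<le> i" and f: "2 \<le> f"
  shows "(n - p) div f + 1 \<le> (n - i - p) div f + i"
proof -
  define d where "d = (n - i - p) div f"
  have f0: "0 < f" using f by simp
  have "d + i = (d + 1) + (i - 1)" using i by simp
  then have "(d + i) * f = (d + 1) * f + (i - 1) * f" by (simp only: add_mult_distrib)
  moreover have "n - i - p < (d + 1) * f"
    unfolding d_def by (subst div_less_iff_less_mult[OF f0, symmetric]) simp
  moreover have "(i - 1) * 2 \<le> (i - 1) * f" using f by simp
  ultimately have "n - p < (d + i) * f" using i by linarith
  then show ?thesis
    unfolding d_def by (subst (asm) div_less_iff_less_mult[OF f0, symmetric]) simp
qed

lemma prime_power_dvd_choose_mult_power:
  fixes p n i :: nat
  assumes p: "prime p" and i: "1 \<le> i"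
  shows "p ^ ((n - p) div (p * (p - 1)) + 1) dvd (n choose i) * p ^ (i + (n - i - p) div (p * (p - 1)))"
proof -
  define f where "f = p * (p - 1)"
  define e where "e = (n - p) div f"
  have "2 \<le> p" using prime_ge_2_nat[OF p] .
  then have f2: "2 * 1 \<le> f" unfolding f_def by (intro mult_le_mono) auto
  consider "2 \<le> i" | "i = 1" "e \<le> (n - 1 - p) div f" | "i = 1" "(n - 1 - p) div f < e"
    using i by linarith
  then show ?thesis
  proof cases
    case 1
    then have "e + 1 \<le> i + (n - i - p) div f"
      using div_diff_le_div_diff_add[of i f n p] f2 unfolding e_def by simp
    then show ?thesis
      unfolding f_def[symmetric] e_def[symmetric] by (intro dvd_mult le_imp_power_dvd)
  next
    case 2
    then show ?thesis
      unfolding f_def[symmetric] e_def[symmetric] by (intro dvd_mult le_imp_power_dvd) simp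
  next
    case 3
    \<comment> \<open>The exponent drops at i = 1 only if phi(p^2) divides n - p, and then p divides n choose 1.\<close>
    then obtain m where m: "n - p = Suc m" by (cases "n - p") (simp_all add: e_def)
    then have m': "n - 1 - p = m" by simp
    with 3 m have "Suc m mod f = 0" and e: "e = m div f + 1"
      unfolding e_def by (simp_all add: div_Suc split: if_splits)
    then have "f dvd Suc m" by (simp add: dvd_eq_mod_eq_0)
    then have "p dvd Suc m" unfolding f_def using dvd_mult_left by blast
    moreover have "n = Suc m + p" using m by simp
    ultimately have "p dvd n" by (metis dvd_add dvd_refl)
    then obtain n' where "n = p * n'" by blast
    then have "(n choose i) * p ^ (i + (n - i - p) div f) = n' * p ^ (e + 1)"
      using 3 e m' by (simp add: algebra_simps)
    then show ?thesis unfolding f_def[symmetric] e_def[symmetric] by simp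
  qed
qed

lemma lucas_ideal:
  fixes X :: "'a::comm_ring_1"
  assumes p: "prime p"
  shows "(1 - X) ^ (p ^ k * n) - (1 - X ^ p ^ k) ^ n
    \<in> ideal2 (of_nat p ^ ((n - p) div (p * (p - 1)) + 1)) (X ^ (p ^ k * p ^ 2) - 1)"
proof -
  define q where "q = p ^ k"
  define w where "w = 1 - X ^ q"
  define f where "f = p * (p - 1)"
  define e where "e = (n - p) div f"
  define B where "B = X ^ (q * p ^ 2) - 1"
  obtain A where "(1 - X) ^ q - w = of_nat p * A"
    using prime_dvd_one_minus_prime_power_diff[OF p, of X k] unfolding q_def w_def by blast
  then have A: "(1 - X) ^ q = of_nat p * A + w" by (simp add: algebra_simps)
  define g where "g i = of_nat (n choose i) * (of_nat p * A) ^ i * w ^ (n - i)" for i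
  have "(1 - X) ^ (q * n) = (\<Sum>i\<le>n. g i)"
    unfolding power_mult A g_def by (rule binomial_ring)
  also have "{..n} = insert 0 {1..n}" by auto
  finally have expand: "(1 - X) ^ (q * n) - w ^ n = (\<Sum>i\<in>{1..n}. g i)"
    by (simp add: g_def)
  have "g i \<in> ideal2 (of_nat p ^ (e + 1)) B" if i: "i \<in> {1..n}" for i
  proof -
    define d where "d = (n - i - p) div f"
    define c where "c = of_nat (n choose i) * of_nat p ^ i * A ^ i"
    have "w ^ (n - i) \<in> ideal2 (of_nat p ^ d) B"
      using fleck_ideal[OF p, of "X ^ q" "n - i" 1]
      by (simp add: w_def d_def f_def B_def power_mult power2_eq_square)
    then have mem: "c * w ^ (n - i) \<in> ideal2 (c * of_nat p ^ d) (c * B)"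
      by (rule ideal2_mult_generators)
    have "g i = c * w ^ (n - i)"
      by (simp add: g_def c_def power_mult_distrib)
    moreover have "of_nat p ^ (e + 1) dvd c * of_nat p ^ d"
    proof -
      obtain r where "(n choose i) * p ^ (i + d) = p ^ (e + 1) * r"
        using prime_power_dvd_choose_mult_power[OF p, of i n] i
        unfolding e_def d_def f_def by auto
      then have r: "(of_nat (n choose i) * of_nat p ^ i * of_nat p ^ d :: 'a) = of_nat p ^ (e + 1) * of_nat r"
        by (metis (mono_tags) of_nat_mult of_nat_power power_add mult.assoc)
      have "c * of_nat p ^ d = (of_nat (n choose i) * of_nat p ^ i * of_nat p ^ d) * A ^ i"
        by (simp add: c_def ac_simps)
      also have "\<dots> = of_nat p ^ (e + 1) * (of_nat r * A ^ i)"
        unfolding r by (simp only: mult.assoc)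
      finally show ?thesis by simp
    qed
    ultimately show ?thesis using ideal2_mono[OF mem _ dvd_triv_right] by simp
  qed
  then have "(\<Sum>i\<in>{1..n}. g i) \<in> ideal2 (of_nat p ^ (e + 1)) B"
    by (rule ideal2_sum)
  then show ?thesis
    unfolding expand[symmetric] by (simp add: q_def w_def e_def f_def B_def)
qed

definition coeff_class_sum :: "'a::comm_ring_1 poly \<Rightarrow> int \<Rightarrow> int \<Rightarrow> 'a" where
  "coeff_class_sum P a m = (\<Sum>k\<le>degree P. if [int k = a] (mod m) then coeff P k else 0)"

lemma coeff_class_sum_le_degree:
  assumes "degree P \<le> D"
  shows "coeff_class_sum P a m = (\<Sum>k\<le>D. if [int k = a] (mod m) then coeff P k else 0)"
  unfolding coeff_class_sum_def
  by (rule sum.mono_neutral_left) (use assms in \<open>auto simp: coeff_eq_0\<close>)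

lemma coeff_class_sum_add: "coeff_class_sum (P + Q) a m = coeff_class_sum P a m + coeff_class_sum Q a m"
proof -
  define D where "D = max (degree P) (degree Q)"
  have "degree (P + Q) \<le> D" "degree P \<le> D" "degree Q \<le> D"
    unfolding D_def by (auto intro: degree_add_le)
  then show ?thesis
    by (simp add: coeff_class_sum_le_degree sum.distrib[symmetric] if_distrib cong: if_cong)
qed

lemma coeff_class_sum_diff: "coeff_class_sum (P - Q) a m = coeff_class_sum P a m - coeff_class_sum Q a m"
proof -
  define D where "D = max (degree P) (degree Q)"
  have "degree (P - Q) \<le> D" "degree P \<le> D" "degree Q \<le> D"
    unfolding D_def by (auto intro: degree_diff_le)
  then show ?thesis
    by (simp add: coeff_class_sum_le_degree sum_subtractf[symmetric] if_distrib cong: if_cong)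
qed

lemma coeff_class_sum_smult: "coeff_class_sum (smult c P) a m = c * coeff_class_sum P a m"
  unfolding coeff_class_sum_le_degree[OF degree_smult_le]
  by (simp add: coeff_class_sum_def sum_distrib_left if_distrib cong: if_cong)

lemma coeff_class_sum_sum:
  "finite S \<Longrightarrow> coeff_class_sum (\<Sum>i\<in>S. f i) a m = (\<Sum>i\<in>S. coeff_class_sum (f i) a m)"
  by (induction S rule: finite_induct)
    (simp_all add: coeff_class_sum_add coeff_class_sum_smult[of 0 0, simplified])

lemma coeff_class_sum_cong: "[a = a'] (mod m) \<Longrightarrow> coeff_class_sum P a m = coeff_class_sum P a' m"
  unfolding coeff_class_sum_def by (rule sum.cong) (auto intro: cong_trans cong_sym)

lemma coeff_class_sum_monom_mult:
  "coeff_class_sum (monom c j * P) a m = c * coeff_class_sum P (a - int j) m"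
proof -
  define g where "g k = (if [int k = a] (mod m) then coeff (monom c j * P) k else 0)" for k
  have "degree (monom c j * P) \<le> j + degree P"
    using degree_mult_le[of "monom c j" P] degree_monom_le[of c j] by simp
  then have "coeff_class_sum (monom c j * P) a m = (\<Sum>k\<le>j + degree P. g k)"
    unfolding g_def by (rule coeff_class_sum_le_degree)
  also have "\<dots> = (\<Sum>k\<in>{0 + j..degree P + j}. g k)"
    by (rule sum.mono_neutral_right) (auto simp: g_def coeff_monom_mult)
  also have "\<dots> = (\<Sum>i\<in>{0..degree P}. g (i + j))"
    by (rule sum.shift_bounds_cl_nat_ivl)
  also have "\<dots> = c * coeff_class_sum P (a - int j) m"
    unfolding coeff_class_sum_def atLeast0AtMost sum_distrib_left
  proof (rule sum.cong)
    fix i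
    have "[int (i + j) = a] (mod m) \<longleftrightarrow> [int i = a - int j] (mod m)"
      by (simp add: cong_iff_dvd_diff algebra_simps)
    then show "g (i + j) = c * (if [int i = a - int j] (mod m) then coeff P i else 0)"
      by (simp add: g_def coeff_monom_mult)
  qed simp
  finally show ?thesis .
qed

lemma coeff_class_sum_monom:
  "coeff_class_sum (monom c k) a m = (if [int k = a] (mod m) then c else 0)"
  using coeff_class_sum_monom_mult[of c k 1 a m]
  by (simp add: coeff_class_sum_def cong_iff_dvd_diff dvd_diff_commute)

lemma coeff_class_sum_cyclotomic_mult: "coeff_class_sum ((monom 1 M - 1) * B) a (int M) = 0"
proof -
  have "[a - int M = a] (mod int M)" by (simp add: cong_iff_dvd_diff)
  then show ?thesis
    by (simp add: left_diff_distrib coeff_class_sum_diff coeff_class_sum_monom_mult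
        coeff_class_sum_cong[of "a - int M" a])
qed

lemma dvd_coeff_class_sum:
  assumes "P \<in> ideal2 [:c:] (monom 1 M - 1)"
  shows "c dvd coeff_class_sum P a (int M)"
proof -
  obtain A B where "P = [:c:] * A + (monom 1 M - 1) * B"
    using assms unfolding ideal2_iff by blast
  then have "coeff_class_sum P a (int M) = c * coeff_class_sum A a (int M)"
    by (simp add: coeff_class_sum_add coeff_class_sum_smult coeff_class_sum_cyclotomic_mult)
  then show ?thesis by simp
qed

lemma coeff_class_sum_monom_sum:
  assumes "finite S"
  shows "coeff_class_sum (\<Sum>k\<in>S. monom (c k) (f k)) a m
    = (\<Sum>k\<in>S. if [int (f k) = a] (mod m) then c k else 0)"
  using assms by (simp add: coeff_class_sum_sum coeff_class_sum_monom)

lemma one_minus_monom_power_expand: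
  "(1 - monom 1 d :: 'a::comm_ring_1 poly) ^ n
    = (\<Sum>k\<le>n. monom (of_int ((-1) ^ k * int (n choose k))) (d * k))"
proof -
  have "of_int z * monom 1 d ^ k = (monom (of_int z) (d * k) :: 'a poly)" for z k
    by (simp only: of_int_poly monom_power) (simp add: smult_monom)
  then show ?thesis by (simp only: one_minus_power_expand)
qed

lemma alt_binom_sum_altdef:
  "alt_binom_sum N a m = (\<Sum>k\<le>N. if [int k = a] (mod m) then (-1) ^ k * int (N choose k) else 0)"
proof -
  have "(\<Sum>k\<le>N. if [int k = a] (mod m) then (-1) ^ k * int (N choose k) else 0)
      = (\<Sum>k\<in>{k \<in> {..N}. [int k = a] (mod m)}. (-1) ^ k * int (N choose k))"
    by (rule sum.inter_filter[symmetric]) simp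
  also have "{k \<in> {..N}. [int k = a] (mod m)} = {k. k \<le> N \<and> [int k = a] (mod m)}" by auto
  finally show ?thesis unfolding alt_binom_sum_def by (simp add: mult.commute)
qed

lemma alt_binom_sum_eq_coeff_class_sum:
  "alt_binom_sum N a m = coeff_class_sum ((1 - monom 1 1) ^ N) a m"
  unfolding one_minus_monom_power_expand alt_binom_sum_altdef
  by (simp add: coeff_class_sum_monom_sum)

lemma cong_mult_add_iff:
  fixes q i r d m :: int
  assumes q: "0 < q" and d: "\<bar>d\<bar> < q"
  shows "[q * i = q * r + d] (mod q * m) \<longleftrightarrow> d = 0 \<and> [i = r] (mod m)"
proof
  assume "[q * i = q * r + d] (mod q * m)"
  then have qm: "q * m dvd q * (i - r) - d" by (simp add: cong_iff_dvd_diff algebra_simps)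
  then have "q dvd q * (i - r) - d" using dvd_mult_left by blast
  then have "q dvd d" by (simp add: dvd_diff_right_iff)
  then have "d = 0" using d dvd_imp_le_int by force
  with qm show "d = 0 \<and> [i = r] (mod m)" using q by (simp add: cong_iff_dvd_diff)
next
  assume "d = 0 \<and> [i = r] (mod m)"
  then show "[q * i = q * r + d] (mod q * m)"
    by (simp add: cong_iff_dvd_diff flip: right_diff_distrib)
qed

lemma coeff_class_sum_lacunary:
  fixes q S T n :: nat and r m :: int
  assumes S: "S < q" and T: "T < q"
  shows "coeff_class_sum ((1 - monom 1 1) ^ S * (1 - monom 1 q) ^ n) (int q * r + int T) (int q * m)
    = (-1) ^ T * int (S choose T) * alt_binom_sum n r m"
proof -
  define W :: "int poly" where "W = (1 - monom 1 q) ^ n"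
  have shifted: "coeff_class_sum W (int q * r + int T - int j) (int q * m)
      = (if j = T then alt_binom_sum n r m else 0)" if "j \<le> S" for j
  proof -
    have "[int (q * i) = int q * r + int T - int j] (mod int q * m)
        \<longleftrightarrow> j = T \<and> [int i = r] (mod m)" for i
      using cong_mult_add_iff[of "int q" "int T - int j" "int i" r m] S T that
      by (auto simp: add_diff_eq)
    then show ?thesis
      unfolding W_def one_minus_monom_power_expand alt_binom_sum_altdef
      by (simp add: coeff_class_sum_monom_sum)
  qed
  have "coeff_class_sum ((1 - monom 1 1) ^ S * W) (int q * r + int T) (int q * m)
      = (\<Sum>j\<le>S. (-1) ^ j * int (S choose j)
          * coeff_class_sum W (int q * r + int T - int j) (int q * m))"
    unfolding one_minus_monom_power_expand sum_distrib_right
    by (simp add: coeff_class_sum_sum coeff_class_sum_monom_mult)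
  also have "\<dots> = (\<Sum>j\<le>S. (-1) ^ j * int (S choose j) * (if j = T then alt_binom_sum n r m else 0))"
    by (rule sum.cong) (simp_all add: shifted)
  also have "\<dots> = (-1) ^ T * int (S choose T) * alt_binom_sum n r m"
    by (cases "T \<le> S") (simp_all add: if_distrib sum.delta cong: if_cong)
  finally show ?thesis unfolding W_def .
qed

lemma alt_binom_sum_lift_dvd:
  fixes p k n S T :: nat and r :: int
  assumes p: "prime p" and S: "S < p ^ k" and T: "T < p ^ k"
  shows "int p ^ ((n - p) div (p * (p - 1)) + 1) dvd
    alt_binom_sum (p ^ k * n + S) (int (p ^ k) * r + int T) (int (p ^ k * p ^ 2))
      - (-1) ^ T * int (S choose T) * alt_binom_sum n r (int (p ^ 2))"
proof -
  define q where "q = p ^ k"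
  define e where "e = (n - p) div (p * (p - 1))"
  define X :: "int poly" where "X = monom 1 1"
  define W where "W = (1 - X ^ q) ^ n"
  define D where "D = (1 - X) ^ (q * n) - W"
  define a where "a = int q * r + int T"
  define M where "M = q * p ^ 2"
  have "(of_nat p ^ (e + 1) :: int poly) = [:int p ^ (e + 1):]"
    by (metis of_nat_power of_nat_poly)
  moreover have "X ^ M = monom 1 M" by (simp add: X_def monom_power)
  moreover have "D \<in> ideal2 (of_nat p ^ (e + 1)) (X ^ M - 1)"
    unfolding D_def W_def q_def e_def M_def by (rule lucas_ideal[OF p])
  ultimately have "(1 - X) ^ S * D \<in> ideal2 [:int p ^ (e + 1):] (monom 1 M - 1)"
    by (simp add: ideal2_mult)
  then have "int p ^ (e + 1) dvd coeff_class_sum ((1 - X) ^ S * D) a (int M)"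
    by (rule dvd_coeff_class_sum)
  moreover have "alt_binom_sum (q * n + S) a (int M)
      = coeff_class_sum ((1 - X) ^ S * W) a (int M) + coeff_class_sum ((1 - X) ^ S * D) a (int M)"
    unfolding alt_binom_sum_eq_coeff_class_sum X_def[symmetric] coeff_class_sum_add[symmetric]
    by (simp add: D_def power_add algebra_simps)
  moreover have "coeff_class_sum ((1 - X) ^ S * W) a (int M)
      = (-1) ^ T * int (S choose T) * alt_binom_sum n r (int (p ^ 2))"
    using coeff_class_sum_lacunary[of S q T n r "int (p ^ 2)"] S T
    by (simp add: W_def X_def a_def M_def q_def monom_power)
  ultimately show ?thesis by (simp add: a_def M_def q_def e_def)
qed

lemma rat_cong_p_powi_mult:
  fixes E x y :: int
  assumes p: "prime p" and dvd: "0 \<le> E \<Longrightarrow> int p ^ (nat E + 1) dvd x - y"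
  shows "rat_cong_p p ((of_nat p :: rat) powi (- E) * of_int x) ((of_nat p :: rat) powi (- E) * of_int y)"
proof -
  have "p > 0" using prime_gt_0_nat[OF p] .
  have "\<exists>z. (of_nat p :: rat) powi (- E) * of_int (x - y) = of_int (int p * z)"
  proof (cases "0 \<le> E")
    case True
    then obtain z where "x - y = int p ^ (nat E + 1) * z" using dvd by blast
    moreover have "(of_nat p :: rat) powi (- E) = inverse (of_nat p ^ nat E)"
      using True by (simp add: power_int_minus power_int_of_nat[symmetric])
    ultimately show ?thesis using \<open>p > 0\<close> by (auto simp: field_simps)
  next
    case False
    define m where "m = nat (- E) - 1"
    have "nat (- E) = Suc m" using False by (simp add: m_def)
    moreover have "(of_nat p :: rat) powi (- E) = of_nat p ^ nat (- E)"
      using False by (simp add: power_int_def)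
    ultimately have "(of_nat p :: rat) powi (- E) = of_nat p * of_nat p ^ m" by simp
    then show ?thesis by (intro exI[of _ "int p ^ m * (x - y)"]) simp
  qed
  then obtain z where "(of_nat p :: rat) powi (- E) * of_int x - of_nat p powi (- E) * of_int y
      = of_int (int p * z) / of_int 1"
    by (auto simp: right_diff_distrib)
  then show ?thesis
    unfolding rat_cong_p_def using prime_gt_1_nat[OF p] by (intro exI[of _ z] exI[of _ 1]) auto
qed

lemma floor_of_int_divide_of_nat: "\<lfloor>(of_int a :: 'a::floor_ceiling) / of_nat b\<rfloor> = a div int b"
  using floor_divide_of_int_eq[of a "int b"] by simp

lemma div_mult_add_small:
  fixes q s x d :: int
  assumes "0 < q" "0 \<le> s" "s < q" "0 \<le> d"
  shows "(q * x + s) div (q * d) = x div d"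
proof -
  have "(q * x + s) div q = x" using assms by simp
  then show ?thesis using assms(4) by (simp add: zdiv_zmult2_eq)
qed

lemma nat_int_diff_div: "nat ((int a - int b) div int c) = (a - b) div c"
proof (cases "b \<le> a")
  case True
  then have "(int a - int b) div int c = int ((a - b) div c)" by (simp add: zdiv_int of_nat_diff)
  then show ?thesis by simp
next
  case False
  then have "(int a - int b) div int c \<le> 0" by (cases "c = 0") (simp_all add: div_nonpos_pos_le0)
  then show ?thesis using False by simp
qed

lemma floor_totient_prime_power_shift:
  fixes p k n :: nat and s :: int
  assumes p: "prime p" and "0 \<le> s" "s < int p ^ k"
  shows "\<lfloor>(of_int (int p ^ k * int n + s - int p ^ (k + 1)) :: rat) / of_nat (totient (p ^ (k + 2)))\<rfloor>
    = (int n - int p) div int (totient (p ^ 2))"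
proof -
  have "totient (p ^ (k + 2)) = p ^ k * totient (p ^ 2)"
    using totient_prime_power[OF p, of "k + 2"] totient_prime_power[OF p, of 2] by simp
  then have "int (totient (p ^ (k + 2))) = int p ^ k * int (totient (p ^ 2))" by simp
  moreover have "int p ^ k * int n + s - int p ^ (k + 1) = int p ^ k * (int n - int p) + s"
    by (simp add: algebra_simps)
  ultimately show ?thesis
    unfolding floor_of_int_divide_of_nat
    by (simp only:) (rule div_mult_add_small, use assms prime_gt_0_nat[OF p] in simp_all)
qed

theorem theorem1p7:
  fixes p \<alpha> n :: nat and r s t :: int
  assumes "prime p" and "\<alpha> \<ge> 2"
    and "0 \<le> s" and "s < int p ^ (\<alpha> - 2)"
    and "0 \<le> t" and "t < int p ^ (\<alpha> - 2)"
  shows "rat_cong_p p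
    ((of_nat p :: rat) powi (- \<lfloor>(of_int (int p ^ (\<alpha> - 2) * int n + s - int p ^ (\<alpha> - 1)) :: rat)
                                   / of_nat (totient (p ^ \<alpha>))\<rfloor>)
      * of_int (alt_binom_sum (p ^ (\<alpha> - 2) * n + nat s) (int p ^ (\<alpha> - 2) * r + t) (int p ^ \<alpha>)))
    ((-1) ^ nat t * of_nat (nat s choose nat t)
      * ((of_nat p :: rat) powi (- \<lfloor>(of_int (int n - int p) :: rat) / of_nat (totient (p ^ 2))\<rfloor>)
         * of_int (alt_binom_sum n r (int p ^ 2))))"
proof -
  note p = \<open>prime p\<close>
  obtain k where \<alpha>: "\<alpha> = k + 2" using \<open>\<alpha> \<ge> 2\<close> by (metis add.commute le_Suc_ex)
  then have exps: "\<alpha> - 2 = k" "\<alpha> - 1 = k + 1" by simp_all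
  define E where "E = (int n - int p) div int (totient (p ^ 2))"
  have S: "nat s < p ^ k" and T: "nat t < p ^ k"
    using assms(3-6) by (simp_all add: exps nat_less_iff)
  have args: "int p ^ k * r + t = int (p ^ k) * r + int (nat t)"
    "int p ^ \<alpha> = int (p ^ k * p ^ 2)" "int p ^ 2 = int (p ^ 2)"
    using assms(5) by (simp_all add: \<alpha> power_add power2_eq_square)
  have "totient (p ^ 2) = p * (p - 1)" using totient_prime_power[OF p, of 2] by simp
  then have "nat E = (n - p) div (p * (p - 1))" unfolding E_def by (simp only: nat_int_diff_div)
  then have "int p ^ (nat E + 1) dvd
      alt_binom_sum (p ^ k * n + nat s) (int p ^ k * r + t) (int p ^ \<alpha>)
      - (-1) ^ nat t * int (nat s choose nat t) * alt_binom_sum n r (int p ^ 2)"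
    unfolding args by (simp only: alt_binom_sum_lift_dvd[OF p S T])
  then have "rat_cong_p p
      ((of_nat p :: rat) powi (- E) * of_int (alt_binom_sum (p ^ k * n + nat s) (int p ^ k * r + t) (int p ^ \<alpha>)))
      ((of_nat p :: rat) powi (- E)
        * of_int ((-1) ^ nat t * int (nat s choose nat t) * alt_binom_sum n r (int p ^ 2)))"
    by (intro rat_cong_p_powi_mult[OF p])
  moreover have "\<lfloor>(of_int (int p ^ k * int n + s - int p ^ (k + 1)) :: rat) / of_nat (totient (p ^ \<alpha>))\<rfloor> = E"
    unfolding \<alpha> E_def using floor_totient_prime_power_shift[OF p] assms(3,4) exps by simp
  moreover have "\<lfloor>(of_int (int n - int p) :: rat) / of_nat (totient (p ^ 2))\<rfloor> = E"
    unfolding floor_of_int_divide_of_nat E_def ..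
  ultimately show ?thesis unfolding exps by (simp add: ac_simps)
qed

end
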